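(* Let $v:\mathbb T\times\mathbb R\to\mathbb R$, $v=\frac12(v_1-v_{-1})$, where $v_{\pm1}$ satisfy: (H2) $\int_0^1v^2(\theta,r)\,d\theta\ne0$ for every $r\in\mathbb R$; (H3) $v_{\pm1}(\cdot,r)$ are trigonometric polynomials of degree at most $d$ for every $r$; (H4) for every rational $p/q$ with $\gcd(p,q)=1$, $1\le|q|\le2d$, and every $\theta$, $\sum_{k=1}^q[v_{-1}(\theta+k/q,p/q)-v_1(\theta+k/q,p/q)]^2\ne0$. Let $p/q$ be an Imaginary Rational, i.e. $\gcd(p,q)=1$ and $d<|q|<\varepsilon^{-b}$. Then for every $\theta$, $\sigma^2(\theta,p/q)\ne0$, where $\sigma^2(\theta,r)=\frac1q\sum_{k=0}^{q-1}v^2(\theta+kr,r)$.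
   Context: $\varepsilon>0$ and $b>0$ are parameters; $d$ is a positive integer; $\mathbb T=\mathbb R/\mathbb Z$. *)

theory Defs
  imports "HOL-Analysis.Analysis"
begin

definition trig_poly_deg :: "nat \<Rightarrow> (real \<Rightarrow> real) \<Rightarrow> bool" where
  "trig_poly_deg d f \<longleftrightarrow>
     (\<exists>a b :: nat \<Rightarrow> real. \<forall>\<theta>. f \<theta> =
        (\<Sum>k\<le>d. a k * cos (2 * pi * real k * \<theta>) + b k * sin (2 * pi * real k * \<theta>)))"

definition vfun :: "(real \<Rightarrow> real \<Rightarrow> real) \<Rightarrow> (real \<Rightarrow> real \<Rightarrow> real) \<Rightarrow> real \<Rightarrow> real \<Rightarrow> real" where
  "vfun v1 vm1 \<theta> r = (v1 \<theta> r - vm1 \<theta> r) / 2"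

definition sigma2 :: "(real \<Rightarrow> real \<Rightarrow> real) \<Rightarrow> real \<Rightarrow> int \<Rightarrow> nat \<Rightarrow> real" where
  "sigma2 v \<theta> p q = (1 / real q) *
     (\<Sum>k<q. (v (\<theta> + real k * (real_of_int p / real q)) (real_of_int p / real q))\<^sup>2)"

end

(* The rotation theta -> theta + p/q with gcd(p, q) = 1 permutes the grid theta + j/q (j < q)
   modulo 1, so q * sigma^2(theta, p/q) = sum_{j<q} v^2(theta + j/q, p/q).  If q <= 2d this is a
   quarter of the sum in (H4).  If q > 2d, v^2(., p/q) is a trigonometric polynomial of degree
   at most 2d < q, and the equispaced q-point rule integrates such polynomials exactly, because
   sum_{j<q} exp(2 pi i n (theta + j/q)) = 0 for 0 < |n| < q; so the sum is q times the integral
   in (H2). *)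

theory Submission
  imports Defs
begin

definition cos_wave :: "int \<Rightarrow> real \<Rightarrow> real \<Rightarrow> real" where
  "cos_wave n a x = cos (2 * pi * of_int n * x + a)"

(* Frequencies range over the integers so that products of waves stay waves (cos_wave_mult). *)
definition wave_sum :: "'i set \<Rightarrow> ('i \<Rightarrow> real) \<Rightarrow> ('i \<Rightarrow> int) \<Rightarrow> ('i \<Rightarrow> real) \<Rightarrow> real \<Rightarrow> real" where
  "wave_sum S c n a x = (\<Sum>i\<in>S. c i * cos_wave (n i) (a i) x)"

lemma cos_wave_plus_of_int: "cos_wave n a (x + of_int m) = cos_wave n a x"
proof -
  have "2 * pi * of_int n * (x + of_int m) + a = (2 * pi * of_int n * x + a) + 2 * pi * of_int (n * m)"
    by (simp add: algebra_simps)
  moreover have "cos (y + 2 * pi * of_int k) = cos y" for y and k :: int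
    by (simp add: cos_add)
  ultimately show ?thesis
    unfolding cos_wave_def by metis
qed

lemma cos_wave_mult:
  "cos_wave m a x * cos_wave n b x = (cos_wave (m - n) (a - b) x + cos_wave (m + n) (a + b) x) / 2"
  unfolding cos_wave_def cos_times_cos by (simp add: algebra_simps)

lemma sum_cos_wave_grid:
  assumes "\<bar>n\<bar> < int q"
  shows "(\<Sum>j<q. cos_wave n a (\<theta> + real j / real q)) = (if n = 0 then real q * cos a else 0)"
proof (cases "n = 0")
  case True
  then show ?thesis by (simp add: cos_wave_def)
next
  case False
  define w where "w = cis (2 * pi * of_int n / real q)"
  define z where "z = cis (2 * pi * of_int n * \<theta> + a)"
  have q: "q > 0" using assms by linarith
  have wave_eq: "cos_wave n a (\<theta> + real j / real q) = Re (z * w ^ j)" for j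
  proof -
    have "z * w ^ j = cis (2 * pi * of_int n * \<theta> + a + real j * (2 * pi * of_int n / real q))"
      unfolding z_def w_def by (simp only: Complex.DeMoivre cis_mult)
    also have "\<dots> = cis (2 * pi * of_int n * (\<theta> + real j / real q) + a)"
      by (simp add: field_simps)
    finally show ?thesis by (simp add: cos_wave_def)
  qed
  have "w \<noteq> 1"
  proof
    assume "w = 1"
    then have "cos (2 * pi * of_int n / real q) = 1"
      unfolding w_def by (metis cis.sel(1) one_complex.sel(1))
    then obtain k :: int where "2 * pi * of_int n / real q = of_int k * 2 * pi"
      using cos_one_2pi_int by blast
    then have "of_int n = of_int k * real q"
      using q by (simp add: field_simps)
    then have "n = k * int q"
      by (metis of_int_eq_iff of_int_mult of_int_of_nat_eq)
    then have "int q dvd n"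
      by simp
    from dvd_imp_le_int[OF False this] show False
      using assms by simp
  qed
  moreover have "w ^ q = 1"
    unfolding w_def Complex.DeMoivre using q by simp
  ultimately have "(\<Sum>j<q. w ^ j) = 0"
    using sum_gp_strict[of w q] by simp
  then have "(\<Sum>j<q. z * w ^ j) = 0"
    by (simp flip: sum_distrib_left)
  then show ?thesis
    unfolding wave_eq using False by (metis Re_sum zero_complex.sel(1))
qed

lemma has_integral_cos_wave:
  "(cos_wave n a has_integral (if n = 0 then cos a else 0)) {0..1}"
proof (cases "n = 0")
  case True
  then show ?thesis
    unfolding cos_wave_def using has_integral_const_real[of "cos a" 0 1] by simp
next
  case False
  define F where "F x = sin (2 * pi * of_int n * x + a) / (2 * pi * of_int n)" for x
  have "(F has_vector_derivative cos_wave n a x) (at x within {0..1})" for x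
    unfolding F_def cos_wave_def has_real_derivative_iff_has_vector_derivative[symmetric]
    using False by (auto intro!: derivative_eq_intros)
  then have "(cos_wave n a has_integral (F 1 - F 0)) {0..1}"
    by (intro fundamental_theorem_of_calculus) auto
  moreover have "sin (2 * pi * of_int n * 1 + a) = sin (a + 2 * pi * of_int n)"
    by (simp add: add.commute)
  then have "F 1 = F 0"
    unfolding F_def by (simp add: sin_add)
  ultimately show ?thesis
    using False by simp
qed

lemma periodic_wave_sum: "periodic_fun_simple' (wave_sum S c n a)"
  by unfold_locales (simp add: wave_sum_def cos_wave_plus_of_int[where m = 1, simplified])

lemma has_integral_wave_sum:
  assumes "finite S"
  shows "(wave_sum S c n a has_integral (\<Sum>i\<in>S. c i * (if n i = 0 then cos (a i) else 0))) {0..1}"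
  unfolding wave_sum_def using assms
  by (intro has_integral_sum has_integral_mult_right has_integral_cos_wave)

lemma sum_wave_sum_grid_eq_integral:
  assumes "finite S" and freq: "\<forall>i\<in>S. \<bar>n i\<bar> < int q"
  shows "(\<Sum>j<q. wave_sum S c n a (\<theta> + real j / real q)) = real q * integral {0..1} (wave_sum S c n a)"
proof -
  have "(\<Sum>j<q. wave_sum S c n a (\<theta> + real j / real q))
      = (\<Sum>i\<in>S. c i * (\<Sum>j<q. cos_wave (n i) (a i) (\<theta> + real j / real q)))"
    unfolding wave_sum_def sum_distrib_left by (rule sum.swap)
  also have "\<dots> = (\<Sum>i\<in>S. real q * (c i * (if n i = 0 then cos (a i) else 0)))"
  proof (rule sum.cong)
    fix i assume "i \<in> S"
    then show "c i * (\<Sum>j<q. cos_wave (n i) (a i) (\<theta> + real j / real q))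
        = real q * (c i * (if n i = 0 then cos (a i) else 0))"
      using freq sum_cos_wave_grid[of "n i" q "a i" \<theta>] by simp
  qed simp
  also have "\<dots> = real q * integral {0..1} (wave_sum S c n a)"
    using integral_unique[OF has_integral_wave_sum[OF \<open>finite S\<close>]] by (simp add: sum_distrib_left)
  finally show ?thesis .
qed

lemma wave_sum_square:
  "(wave_sum S c n a x)\<^sup>2 = wave_sum (S \<times> S \<times> UNIV) (\<lambda>(i, j, _). c i * c j / 2)
     (\<lambda>(i, j, s). n i + (if s then n j else - n j)) (\<lambda>(i, j, s). a i + (if s then a j else - a j)) x"
proof -
  have "(wave_sum S c n a x)\<^sup>2 = (\<Sum>i\<in>S. \<Sum>j\<in>S. c i * c j * (cos_wave (n i) (a i) x * cos_wave (n j) (a j) x))"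
    unfolding wave_sum_def power2_eq_square sum_product by (simp add: ac_simps)
  also have "\<dots> = (\<Sum>i\<in>S. \<Sum>j\<in>S. \<Sum>s\<in>UNIV. c i * c j / 2 *
      cos_wave (n i + (if s then n j else - n j)) (a i + (if s then a j else - a j)) x)"
    by (simp add: cos_wave_mult UNIV_bool algebra_simps add_divide_distrib)
  also have "\<dots> = wave_sum (S \<times> S \<times> UNIV) (\<lambda>(i, j, _). c i * c j / 2)
      (\<lambda>(i, j, s). n i + (if s then n j else - n j)) (\<lambda>(i, j, s). a i + (if s then a j else - a j)) x"
    unfolding wave_sum_def sum.cartesian_product by (simp add: case_prod_beta)
  finally show ?thesis .
qed

lemma trig_poly_deg_half_diff:
  assumes "trig_poly_deg d f" "trig_poly_deg d g"
  shows "trig_poly_deg d (\<lambda>x. (f x - g x) / 2)"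
proof -
  obtain a1 b1 a2 b2 where
    "\<forall>x. f x = (\<Sum>k\<le>d. a1 k * cos (2 * pi * real k * x) + b1 k * sin (2 * pi * real k * x))"
    "\<forall>x. g x = (\<Sum>k\<le>d. a2 k * cos (2 * pi * real k * x) + b2 k * sin (2 * pi * real k * x))"
    using assms unfolding trig_poly_deg_def by blast
  then have eq: "\<forall>x. (f x - g x) / 2 = (\<Sum>k\<le>d. (a1 k - a2 k) / 2 * cos (2 * pi * real k * x)
      + (b1 k - b2 k) / 2 * sin (2 * pi * real k * x))"
    by (auto simp: sum_divide_distrib sum_subtractf[symmetric] intro!: sum.cong) (simp add: field_simps)
  show ?thesis
    unfolding trig_poly_deg_def by (rule exI, rule exI, rule eq)
qed

lemma trig_poly_deg_imp_wave_sum: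
  assumes "trig_poly_deg d f"
  obtains c a where "f = wave_sum ({..d} \<times> UNIV) c (\<lambda>(k, _ :: bool). int k) a"
proof -
  obtain \<alpha> \<beta> where f:
    "\<forall>x. f x = (\<Sum>k\<le>d. \<alpha> k * cos (2 * pi * real k * x) + \<beta> k * sin (2 * pi * real k * x))"
    using assms unfolding trig_poly_deg_def by blast
  define c where "c = (\<lambda>(k, s). if s then \<alpha> k else \<beta> k)"
  define a :: "nat \<times> bool \<Rightarrow> real" where "a = (\<lambda>(_, s). if s then 0 else - (pi / 2))"
  have f_eq: "f x = wave_sum ({..d} \<times> UNIV) c (\<lambda>(k, _). int k) a x" for x
  proof -
    have "wave_sum ({..d} \<times> UNIV) c (\<lambda>(k, _). int k) a x
        = (\<Sum>k\<le>d. \<Sum>s\<in>UNIV. c (k, s) * cos_wave (int k) (a (k, s)) x)"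
      unfolding wave_sum_def sum.cartesian_product by (intro sum.cong) auto
    also have "\<dots> = f x"
      by (simp add: f UNIV_bool c_def a_def cos_wave_def cos_diff add.commute)
    finally show ?thesis
      by simp
  qed
  show ?thesis
    by (rule that[of c a]) (rule ext, rule f_eq)
qed

lemma trig_poly_deg_periodic:
  assumes "trig_poly_deg d f"
  shows "periodic_fun_simple' f"
proof -
  obtain c a where "f = wave_sum ({..d} \<times> UNIV) c (\<lambda>(k, _ :: bool). int k) a"
    using trig_poly_deg_imp_wave_sum[OF assms] .
  then show ?thesis
    by (simp only: periodic_wave_sum)
qed

lemma sum_trig_poly_square_grid:
  assumes "trig_poly_deg d f" "2 * d < q"
  shows "(\<Sum>j<q. (f (\<theta> + real j / real q))\<^sup>2) = real q * integral {0..1} (\<lambda>x. (f x)\<^sup>2)"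
proof -
  define S where "S = {..d} \<times> (UNIV :: bool set)"
  define n where "n = (\<lambda>(k, _ :: bool). int k)"
  obtain c a where "f = wave_sum S c n a"
    using trig_poly_deg_imp_wave_sum[OF assms(1)] unfolding S_def n_def .
  then have square: "(f x)\<^sup>2 = wave_sum (S \<times> S \<times> UNIV) (\<lambda>(i, j, _). c i * c j / 2)
      (\<lambda>(i, j, s). n i + (if s then n j else - n j)) (\<lambda>(i, j, s). a i + (if s then a j else - a j)) x" for x
    by (simp add: wave_sum_square)
  have "\<forall>(i, j, s) \<in> S \<times> S \<times> UNIV. \<bar>n i + (if s then n j else - n j)\<bar> < int q"
    using assms(2) by (auto simp: S_def n_def)
  then show ?thesis
    unfolding square by (intro sum_wave_sum_grid_eq_integral) (auto simp: S_def)
qed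

lemma bij_betw_mult_mod:
  fixes p :: int
  assumes "coprime p (int q)"
  shows "bij_betw (\<lambda>k. nat (int k * p mod int q)) {..<q} {..<q}"
proof (rule bij_betw_imageI)
  show "inj_on (\<lambda>k. nat (int k * p mod int q)) {..<q}"
  proof
    fix k l assume k: "k \<in> {..<q}" and l: "l \<in> {..<q}"
      and "nat (int k * p mod int q) = nat (int l * p mod int q)"
    then have "int k * p mod int q = int l * p mod int q"
      by (simp add: nat_eq_iff2)
    then have "int q dvd (int k - int l) * p"
      by (simp add: mod_eq_dvd_iff left_diff_distrib)
    then have dvd: "int q dvd int k - int l"
      using assms by (simp add: coprime_dvd_mult_left_iff coprime_commute)
    show "k = l"
    proof (rule ccontr)
      assume "k \<noteq> l"
      then have "int k - int l \<noteq> 0"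
        by simp
      from dvd_imp_le_int[OF this dvd] have "int q \<le> \<bar>int k - int l\<bar>"
        by simp
      then show False
        using k l by simp
    qed
  qed
  then show "(\<lambda>k. nat (int k * p mod int q)) ` {..<q} = {..<q}"
    by (intro endo_inj_surj) (auto simp: nat_less_iff)
qed

lemma periodic_sum_rotation:
  fixes p :: int
  assumes "periodic_fun_simple' g" and "coprime p (int q)"
  shows "(\<Sum>k<q. g (\<theta> + real k * (of_int p / real q))) = (\<Sum>j<q. g (\<theta> + real j / real q))"
proof (cases "q = 0")
  case False
  interpret periodic_fun_simple' g
    by (fact assms(1))
  define h where "h k = nat (int k * p mod int q)" for k
  have "g (\<theta> + real k * (of_int p / real q)) = g (\<theta> + real (h k) / real q)" for k
  proof -
    have "real_of_int (int k * p) = real q * of_int (int k * p div int q) + of_int (int k * p mod int q)"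
      by (metis mult_div_mod_eq of_int_add of_int_mult of_int_of_nat_eq)
    then have "\<theta> + real k * (of_int p / real q) = (\<theta> + real (h k) / real q) + of_int (int k * p div int q)"
      using False by (simp add: h_def field_simps)
    then show ?thesis
      by (simp only: plus_of_int)
  qed
  then have "(\<Sum>k<q. g (\<theta> + real k * (of_int p / real q))) = (\<Sum>k<q. (\<lambda>j. g (\<theta> + real j / real q)) (h k))"
    by simp
  also have "\<dots> = (\<Sum>j<q. g (\<theta> + real j / real q))"
    unfolding h_def by (rule sum.reindex_bij_betw[OF bij_betw_mult_mod[OF assms(2)]])
  finally show ?thesis .
qed simp

lemma periodic_sum_grid_shift:
  fixes g :: "real \<Rightarrow> 'a :: cancel_comm_monoid_add"
  assumes "periodic_fun_simple' g"
  shows "(\<Sum>k=1..q. g (\<theta> + real k / real q)) = (\<Sum>k<q. g (\<theta> + real k / real q))"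
proof (cases "q = 0")
  case False
  define G where "G k = g (\<theta> + real k / real q)" for k
  have "G q = G 0"
    using False periodic_fun_simple'.plus_period[OF assms] by (simp add: G_def)
  have "(\<Sum>k=1..q. G k) = (\<Sum>k<q. G (Suc k))"
    by (simp add: sum.atLeast1_atMost_eq)
  also have "\<dots> = (\<Sum>k<q. G k)"
    using sum.lessThan_Suc_shift[of G q] sum.lessThan_Suc[of G q] \<open>G q = G 0\<close>
    by (metis add.commute add_left_cancel)
  finally show ?thesis
    unfolding G_def .
qed simp

theorem lemma2:
  fixes v1 vm1 :: "real \<Rightarrow> real \<Rightarrow> real" and d :: nat and \<epsilon> b :: real
    and p :: int and q :: nat
  assumes eps: "\<epsilon> > 0" and bpos: "b > 0" and dpos: "d > 0"
    and H2: "\<forall>r. integral {0..1} (\<lambda>\<theta>. (vfun v1 vm1 \<theta> r)\<^sup>2) \<noteq> 0"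
    and H3: "\<forall>r. trig_poly_deg d (\<lambda>\<theta>. v1 \<theta> r) \<and> trig_poly_deg d (\<lambda>\<theta>. vm1 \<theta> r)"
    and H4: "\<forall>p' :: int. \<forall>q' :: nat. coprime p' (int q') \<and> 1 \<le> q' \<and> q' \<le> 2 * d \<longrightarrow>
               (\<forall>\<theta>. (\<Sum>k=1..q'. (vm1 (\<theta> + real k / real q') (real_of_int p' / real q')
                                    - v1 (\<theta> + real k / real q') (real_of_int p' / real q'))\<^sup>2) \<noteq> 0)"
    and cop: "coprime p (int q)"
    and imag: "d < q" "real q < \<epsilon> powr (- b)"
  shows "\<forall>\<theta>. sigma2 (vfun v1 vm1) \<theta> p q \<noteq> 0"
proof
  fix \<theta> :: real
  define r where "r = real_of_int p / real q"
  define f where "f x = vfun v1 vm1 x r" for x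
  have "trig_poly_deg d f"
    using H3 unfolding f_def vfun_def by (intro trig_poly_deg_half_diff) auto
  then have periodic: "periodic_fun_simple' (\<lambda>x. (f x)\<^sup>2)"
    by unfold_locales (simp add: periodic_fun_simple'.plus_period[OF trig_poly_deg_periodic])
  have "(\<Sum>j<q. (f (\<theta> + real j / real q))\<^sup>2) \<noteq> 0"
  proof (cases "q \<le> 2 * d")
    case True
    have "(\<Sum>k=1..q. (vm1 (\<theta> + real k / real q) r - v1 (\<theta> + real k / real q) r)\<^sup>2) \<noteq> 0"
      using H4 cop imag(1) True unfolding r_def by auto
    moreover have "(vm1 x r - v1 x r)\<^sup>2 = 4 * (f x)\<^sup>2" for x
      unfolding f_def vfun_def by (simp add: power2_eq_square algebra_simps)
    ultimately have "(\<Sum>k=1..q. (f (\<theta> + real k / real q))\<^sup>2) \<noteq> 0"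
      by (simp flip: sum_distrib_left)
    then show ?thesis
      using periodic_sum_grid_shift[OF periodic] by simp
  next
    case False
    then show ?thesis
      using sum_trig_poly_square_grid[OF \<open>trig_poly_deg d f\<close>] H2 imag(1) unfolding f_def by simp
  qed
  then show "sigma2 (vfun v1 vm1) \<theta> p q \<noteq> 0"
    using periodic_sum_rotation[OF periodic cop] imag(1)
    unfolding sigma2_def f_def r_def by simp
qed

end
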